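(* Suppose $\{x\in\mathbb{R}^n:A^\top x\le u\}=\emptyset$. Let $\mathcal{D}:=\{\lambda\in\mathbb{R}^m: A\lambda=0,\ \lambda\ge0,\ u^\top\lambda<0,\ \|\lambda\|\le1\}$, and let $r^*$ be the supremum of all $r$ for which there exists $\lambda^c$ with $A\lambda^c=0$ and $B(\lambda^c,r)\cap\mathrm{Null}(A)\subseteq\mathcal{D}$. Then $$\frac{\|P_Au\|}{\tau(A,u)\sqrt m}+1\ \le\ \frac1{r^*}\ \le\ \Big(\frac{\|P_Au\|}{\tau(A,u)}+1\Big)\Big(\frac{m}{\rho(A)}+\sqrt m+1\Big).$$
   Context: $A=[a_1|\cdots|a_m]\in\mathbb{R}^{n\times m}$ has columns of unit Euclidean norm and $\{A\lambda:\lambda\ge0\}=\mathbb{R}^n$; $u\in\mathbb{R}^m$. $\|\cdot\|$ is the Euclidean norm, $B(c,r)$ the closed Euclidean ball in $\mathbb{R}^m$, $\mathrm{Null}(A)$ the nullspace of $A$, and $P_A:=I-A^\top(AA^\top)^{-1}A$. $\tau(A,u):=|z^*|$ with $z^*:=\max_x\min_i(u_i-a_i^\top x)$. $\|M\|_{1,2}:=\max_{\|w\|_1=1}\|Mw\|_2$ and $\rho(A):=\min_{\Delta A}\{\|\Delta A\|_{1,2}:\exists v\ne0,\ (A+\Delta A)^\top v\le0\}$ (if $\rho(A)=0$ the upper bound is read as $+\infty$). *)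

theory Defs
  imports "HOL-Analysis.Analysis"
begin

text \<open>A :: real^'m^'n is an n x m matrix (n rows, m columns); column i is a_i.\<close>

definition z_star :: "real^'m^'n \<Rightarrow> real^'m \<Rightarrow> real" where
  "z_star A u = (SUP x. Min (range (\<lambda>i. u $ i - column i A \<bullet> x)))"

definition tau :: "real^'m^'n \<Rightarrow> real^'m \<Rightarrow> real" where
  "tau A u = \<bar>z_star A u\<bar>"

definition proj_A :: "real^'m^'n \<Rightarrow> real^'m^'m" where
  "proj_A A = mat 1 - transpose A ** matrix_inv (A ** transpose A) ** A"

definition norm12 :: "real^'m^'n \<Rightarrow> real" where
  "norm12 M = Sup {norm (M *v w) | w. (\<Sum>i\<in>UNIV. \<bar>w $ i\<bar>) = 1}"

definition rho :: "real^'m^'n \<Rightarrow> real" where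
  "rho A = Inf {norm12 dA | dA. \<exists>v. v \<noteq> 0 \<and> (\<forall>i. (transpose (A + dA) *v v) $ i \<le> 0)}"

definition Dset :: "real^'m^'n \<Rightarrow> real^'m \<Rightarrow> (real^'m) set" where
  "Dset A u = {l. A *v l = 0 \<and> (\<forall>i. 0 \<le> l $ i) \<and> u \<bullet> l < 0 \<and> norm l \<le> 1}"

definition r_star :: "real^'m^'n \<Rightarrow> real^'m \<Rightarrow> real" where
  "r_star A u = Sup {r. \<exists>lc. A *v lc = 0 \<and> cball lc r \<inter> {l. A *v l = 0} \<subseteq> Dset A u}"

end

theory Submission
  imports Defs
begin

text \<open>The dual of \<open>z* = max\<^sub>x min\<^sub>i (u\<^sub>i - a\<^sub>i\<^sup>T x)\<close> is \<open>min {u\<^sup>T \<lambda> | A \<lambda> = 0, \<lambda> in the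
  probability simplex}\<close>; strong duality (by hyperplane separation) and infeasibility give
  \<open>\<tau> = - z* > 0\<close>.
  Lower bound: if \<open>B(\<lambda>\<^sup>c, r) \<inter> Null(A) \<subseteq> \<D>\<close>, moving \<open>\<lambda>\<^sup>c\<close> by \<open>r\<close> along \<open>\<lambda>\<^sup>c\<close> and along
  \<open>P\<^sub>A u \<in> Null(A)\<close> stays in \<open>\<D>\<close>, so \<open>\<parallel>\<lambda>\<^sup>c\<parallel> + r \<le> 1\<close> and \<open>u\<^sup>T \<lambda>\<^sup>c + r \<parallel>P\<^sub>A u\<parallel> < 0\<close>; weak duality
  applied to \<open>\<lambda>\<^sup>c\<close> normalised into the simplex, whose \<open>1\<close>-norm is at most \<open>\<surd>m \<parallel>\<lambda>\<^sup>c\<parallel>\<close>, bounds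
  \<open>u\<^sup>T \<lambda>\<^sup>c\<close> below by \<open>- \<tau> \<surd>m (1 - r)\<close>.
  Upper bound: a null vector \<open>\<nu> \<ge> 1\<close> combined with a dual optimum \<open>\<theta>\<close> gives an explicit inscribed
  ball centred at a multiple of \<open>k \<theta> + \<nu>\<close>; its radius depends on \<open>\<parallel>\<nu>\<parallel>\<close>, which is at most
  \<open>m / \<rho> + \<surd>m\<close> because \<open>- \<rho> a\<^sub>j\<close> lies in the convex hull of the columns for every \<open>j\<close>.\<close>

lemma transpose_mult_vec_nth: "(transpose A *v x) $ i = column i A \<bullet> (x::real^'n)"
  by (simp add: matrix_vector_mult_def column_def inner_vec_def transpose_def mult.commute)

lemma inner_matrix_vector_mult_column:
  "(A *v (l::real^'m)) \<bullet> (x::real^'n) = (\<Sum>i\<in>UNIV. l$i * (column i A \<bullet> x))"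
  by (simp add: matrix_mult_sum inner_sum_left scalar_mult_eq_scaleR)

lemma inner_matrix_vector_mult_le:
  assumes "\<forall>i. 0 \<le> l$i" "\<forall>i. column i A \<bullet> x \<le> K"
  shows "(A *v l) \<bullet> (x::real^'n) \<le> K * (\<Sum>i\<in>UNIV. (l::real^'m)$i)"
proof -
  have "(A *v l) \<bullet> x = (\<Sum>i\<in>UNIV. l$i * (column i A \<bullet> x))"
    by (rule inner_matrix_vector_mult_column)
  also have "\<dots> \<le> (\<Sum>i\<in>UNIV. l$i * K)"
    using assms by (intro sum_mono mult_left_mono) auto
  finally show ?thesis by (simp add: sum_distrib_left mult.commute)
qed

lemma sum_le_sqrt_card_norm: "(\<Sum>i\<in>UNIV. (l::real^'m)$i) \<le> sqrt (real CARD('m)) * norm l"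
proof -
  have "(\<Sum>i\<in>UNIV. l$i) = (\<chi> i. 1 :: real^'m) \<bullet> l" by (simp add: inner_vec_def)
  also have "\<dots> \<le> norm (\<chi> i. 1 :: real^'m) * norm l" by (rule norm_cauchy_schwarz)
  finally show ?thesis by (simp add: norm_eq_sqrt_inner inner_vec_def)
qed

definition prob_simplex :: "(real^'m) set" where
  "prob_simplex = {t. (\<forall>i. 0 \<le> t$i) \<and> (\<Sum>i\<in>UNIV. t$i) = 1}"

lemma norm_le_1_prob_simplex: "t \<in> prob_simplex \<Longrightarrow> norm t \<le> 1"
  using norm_le_l1_cart[of t] by (simp add: prob_simplex_def)

lemma compact_prob_simplex: "compact (prob_simplex :: (real^'m) set)"
proof -
  have "prob_simplex = (\<Inter>i. {t::real^'m. 0 \<le> t$i}) \<inter> {t. (\<Sum>i\<in>UNIV. t$i) = 1}"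
    by (auto simp: prob_simplex_def)
  moreover have "closed {t::real^'m. (\<Sum>i\<in>UNIV. t$i) = 1}"
    by (intro closed_Collect_eq continuous_intros)
  moreover have "closed {t::real^'m. 0 \<le> t$i}" for i
    by (intro closed_Collect_le continuous_intros)
  moreover have "bounded (prob_simplex :: (real^'m) set)"
    unfolding bounded_iff using norm_le_1_prob_simplex by blast
  ultimately show ?thesis by (metis closed_INT closed_Int compact_eq_bounded_closed)
qed

lemma convex_prob_simplex: "convex (prob_simplex :: (real^'m) set)"
  unfolding convex_def prob_simplex_def
  by (auto simp: sum.distrib sum_distrib_left[symmetric])

lemma axis_in_prob_simplex: "axis i 1 \<in> prob_simplex"
  by (simp add: prob_simplex_def axis_def)

lemma normalized_in_prob_simplex:
  assumes "\<forall>i. 0 \<le> l$i" "(\<Sum>i\<in>UNIV. l$i) > 0"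
  shows "(1 / (\<Sum>i\<in>UNIV. l$i)) *\<^sub>R l \<in> prob_simplex"
  using assms by (simp add: prob_simplex_def sum_divide_distrib[symmetric])

lemma compact_convex_linear_image_prob_simplex:
  fixes f :: "real^'m \<Rightarrow> 'b::euclidean_space"
  assumes "linear f"
  shows "compact (f ` prob_simplex)" "convex (f ` prob_simplex)"
  using assms compact_prob_simplex convex_prob_simplex
  by (auto intro: compact_continuous_image linear_continuous_on convex_linear_image
      simp: linear_conv_bounded_linear)

lemma pos_span_obtain:
  assumes "{A *v l | l. \<forall>i. 0 \<le> l $ i} = UNIV"
  obtains l where "\<forall>i. 0 \<le> l $ i" "A *v l = y"
proof -
  have "y \<in> {A *v l | l. \<forall>i. 0 \<le> l $ i}" using assms by simp
  then show ?thesis using that by auto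
qed

lemma pos_span_null_vector_ge_1:
  fixes A :: "real^'m^'n"
  assumes "{A *v l | l. \<forall>i. 0 \<le> l $ i} = UNIV"
  obtains mu where "A *v mu = 0" "\<forall>i. 1 \<le> mu $ i"
proof -
  obtain l where l: "\<forall>i. 0 \<le> l $ i" "A *v l = - (A *v (\<chi> i. 1))"
    using pos_span_obtain[OF assms] by blast
  have "A *v (l + (\<chi> i. 1)) = 0" using l by (simp add: matrix_vector_right_distrib)
  moreover have "\<forall>i. 1 \<le> (l + (\<chi> i. 1)) $ i" using l by simp
  ultimately show ?thesis using that by blast
qed

lemma null_prob_simplex_nonempty:
  fixes A :: "real^'m^'n"
  assumes "{A *v l | l. \<forall>i. 0 \<le> l $ i} = UNIV"
  obtains t where "t \<in> prob_simplex" "A *v t = 0"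
proof -
  obtain mu where mu: "A *v mu = 0" "\<forall>i. 1 \<le> mu $ i"
    using pos_span_null_vector_ge_1[OF assms] by blast
  have mu0: "\<forall>i. 0 \<le> mu $ i" using mu(2) by (meson order.trans zero_le_one)
  have "(\<Sum>i\<in>UNIV. mu$i) > 0"
    using mu(2) by (intro sum_pos) (auto intro: order.strict_trans2[OF zero_less_one])
  then show ?thesis
    using that normalized_in_prob_simplex[OF mu0] mu(1) by (simp add: matrix_vector_mult_scaleR)
qed

text \<open>Both \<open>x $ k\<close> and \<open>- x $ k\<close> are of the form \<open>(A *v l) \<bullet> x\<close> with \<open>l \<ge> 0\<close>.\<close>
lemma bounded_column_sublevel:
  fixes A :: "real^'m^'n"
  assumes ps: "{A *v l | l. \<forall>i. 0 \<le> l $ i} = UNIV"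
  shows "bounded {x. \<forall>i. column i A \<bullet> x \<le> K}"
proof -
  have "\<forall>k. \<exists>l. (\<forall>i. 0 \<le> l $ i) \<and> A *v l = axis k 1"
       "\<forall>k. \<exists>l. (\<forall>i. 0 \<le> l $ i) \<and> A *v l = - axis k 1"
    by (metis pos_span_obtain[OF ps])+
  then obtain lp ln :: "'n \<Rightarrow> real^'m" where
    lp: "\<And>k. (\<forall>i. 0 \<le> lp k $ i) \<and> A *v lp k = axis k 1" and
    ln: "\<And>k. (\<forall>i. 0 \<le> ln k $ i) \<and> A *v ln k = - axis k 1"
    by metis
  define C where "C k = \<bar>K\<bar> * ((\<Sum>i\<in>UNIV. lp k$i) + (\<Sum>i\<in>UNIV. ln k$i))" for k
  have "\<bar>x$k\<bar> \<le> C k" if x: "\<forall>i. column i A \<bullet> x \<le> K" for x k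
  proof -
    have "x$k \<le> K * (\<Sum>i\<in>UNIV. lp k$i)" "- x$k \<le> K * (\<Sum>i\<in>UNIV. ln k$i)"
      using inner_matrix_vector_mult_le[OF conjunct1[OF lp[of k]] x]
        inner_matrix_vector_mult_le[OF conjunct1[OF ln[of k]] x] lp[of k] ln[of k]
      by (simp_all add: inner_axis')
    moreover have "0 \<le> (\<Sum>i\<in>UNIV. lp k$i)" "0 \<le> (\<Sum>i\<in>UNIV. ln k$i)"
      using lp ln by (auto intro: sum_nonneg)
    moreover have "K * s \<le> \<bar>K\<bar> * s" if "0 \<le> s" for s
      using that by (simp add: mult_right_mono)
    ultimately show ?thesis
      unfolding C_def distrib_left abs_le_iff by (smt (verit) mult_nonneg_nonneg abs_ge_zero)
  qed
  then show ?thesis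
    unfolding bounded_iff by (metis (mono_tags) mem_Collect_eq norm_le_l1_cart sum_mono order.trans)
qed

subsection \<open>The primal problem and weak duality\<close>

definition min_slack :: "real^'m^'n \<Rightarrow> real^'m \<Rightarrow> real^'n \<Rightarrow> real" where
  "min_slack A u x = Min (range (\<lambda>i. u $ i - column i A \<bullet> x))"

lemma z_star_eq_SUP_min_slack: "z_star A u = (SUP x. min_slack A u x)"
  by (simp add: z_star_def min_slack_def)

lemma min_slack_le: "min_slack A u x \<le> u $ i - column i A \<bullet> x"
  unfolding min_slack_def by (rule Min_le) auto

lemma min_slack_attained: obtains i where "min_slack A u x = u $ i - column i A \<bullet> x"
proof -
  have "min_slack A u x \<in> range (\<lambda>i. u $ i - column i A \<bullet> x)"
    unfolding min_slack_def by (rule Min_in) auto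
  then show ?thesis using that by auto
qed

lemma min_slack_lipschitz:
  "min_slack A u x \<le> min_slack A u y + (\<Sum>i\<in>UNIV. norm (column i A)) * norm (x - y)"
proof -
  obtain j where j: "min_slack A u y = u $ j - column j A \<bullet> y"
    by (rule min_slack_attained)
  have "column j A \<bullet> y - column j A \<bullet> x \<le> norm (column j A) * norm (x - y)"
    using norm_cauchy_schwarz[of "column j A" "y - x"] by (simp add: inner_diff_right norm_minus_commute)
  also have "\<dots> \<le> (\<Sum>i\<in>UNIV. norm (column i A)) * norm (x - y)"
    by (intro mult_right_mono member_le_sum) auto
  finally show ?thesis using min_slack_le[of A u x j] j by linarith
qed

lemma continuous_on_min_slack: "continuous_on S (min_slack A u)"
proof -
  define L where "L = (\<Sum>i\<in>UNIV. norm (column i A))"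
  have "\<bar>min_slack A u x - min_slack A u y\<bar> \<le> L * dist x y" for x y
    using min_slack_lipschitz[of A u x y] min_slack_lipschitz[of A u y x]
    by (simp add: L_def dist_norm norm_minus_commute abs_le_iff)
  then have "L-lipschitz_on S (min_slack A u)"
    by (intro lipschitz_onI) (auto simp: L_def dist_real_def intro: sum_nonneg)
  then show ?thesis by (rule lipschitz_on_continuous_on)
qed

lemma min_slack_le_dual:
  assumes "A *v l = 0" "l \<in> prob_simplex"
  shows "min_slack A u x \<le> u \<bullet> l"
proof -
  have "min_slack A u x = (\<Sum>i\<in>UNIV. l$i * min_slack A u x)"
    using assms(2) by (simp add: prob_simplex_def sum_distrib_right[symmetric])
  also have "\<dots> \<le> (\<Sum>i\<in>UNIV. l$i * (u $ i - column i A \<bullet> x))"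
    using assms(2) by (intro sum_mono mult_left_mono min_slack_le) (auto simp: prob_simplex_def)
  also have "\<dots> = (\<Sum>i\<in>UNIV. l$i * u$i) - (\<Sum>i\<in>UNIV. l$i * (column i A \<bullet> x))"
    by (simp add: right_diff_distrib sum_subtractf)
  also have "\<dots> = u \<bullet> l - (A *v l) \<bullet> x"
    by (simp only: inner_matrix_vector_mult_column) (simp add: inner_vec_def mult.commute)
  finally show ?thesis using assms(1) by simp
qed

lemma bdd_above_min_slack:
  fixes A :: "real^'m^'n"
  assumes "{A *v l | l. \<forall>i. 0 \<le> l $ i} = UNIV"
  shows "bdd_above (range (min_slack A u))"
  using null_prob_simplex_nonempty[OF assms] min_slack_le_dual by (metis bdd_aboveI2)

lemma z_star_le_dual:
  assumes "A *v l = 0" "l \<in> prob_simplex"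
  shows "z_star A u \<le> u \<bullet> l"
  unfolding z_star_eq_SUP_min_slack by (rule cSUP_least) (use min_slack_le_dual[OF assms] in auto)

text \<open>The superlevel set \<open>{x. min_slack A u 0 \<le> min_slack A u x}\<close> is compact, since on it every
  \<open>column i A \<bullet> x\<close> is bounded by \<open>u $ i - min_slack A u 0\<close>.\<close>
lemma z_star_attained:
  fixes A :: "real^'m^'n"
  assumes ps: "{A *v l | l. \<forall>i. 0 \<le> l $ i} = UNIV"
  obtains xs where "z_star A u = min_slack A u xs"
proof -
  define F where "F = {x. min_slack A u 0 \<le> min_slack A u x}"
  define K where "K = (\<Sum>i\<in>UNIV. \<bar>u$i\<bar>) - min_slack A u 0"
  have "F \<subseteq> {x. \<forall>i. column i A \<bullet> x \<le> K}"
  proof (safe)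
    fix x i assume "x \<in> F"
    then have "min_slack A u 0 \<le> u $ i - column i A \<bullet> x"
      using min_slack_le[of A u x i] by (simp add: F_def)
    moreover have "u$i \<le> (\<Sum>i\<in>UNIV. \<bar>u$i\<bar>)"
      using member_le_sum[of i UNIV "\<lambda>i. \<bar>u$i\<bar>"] by simp
    ultimately show "column i A \<bullet> x \<le> K" unfolding K_def by linarith
  qed
  then have "bounded F" using bounded_column_sublevel[OF ps] bounded_subset by blast
  moreover have "closed F"
    unfolding F_def by (intro closed_Collect_le continuous_on_const continuous_on_min_slack)
  moreover have "0 \<in> F" by (simp add: F_def)
  ultimately obtain xs where xs: "xs \<in> F" "\<forall>y\<in>F. min_slack A u y \<le> min_slack A u xs"
    using continuous_attains_sup[of F "min_slack A u"] continuous_on_min_slack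
    by (metis compact_eq_bounded_closed empty_iff)
  have "min_slack A u x \<le> min_slack A u xs" for x
    using xs \<open>0 \<in> F\<close> by (cases "x \<in> F") (auto simp: F_def)
  then have "z_star A u = min_slack A u xs"
    unfolding z_star_eq_SUP_min_slack
    by (intro antisym cSUP_least cSUP_upper bdd_above_min_slack[OF ps]) auto
  then show ?thesis by (rule that)
qed

lemma z_star_neg_if_infeasible:
  fixes A :: "real^'m^'n"
  assumes ps: "{A *v l | l. \<forall>i. 0 \<le> l $ i} = UNIV"
    and infeas: "{x. \<forall>i. (transpose A *v x) $ i \<le> u $ i} = {}"
  shows "z_star A u < 0"
proof -
  obtain xs where xs: "z_star A u = min_slack A u xs" using z_star_attained[OF ps] .
  obtain i where "\<not> (transpose A *v xs) $ i \<le> u $ i" using infeas by auto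
  then have "u $ i < column i A \<bullet> xs" by (simp only: transpose_mult_vec_nth not_le)
  then show ?thesis using xs min_slack_le[of A u xs i] by linarith
qed

lemma tau_eq_neg_z_star:
  fixes A :: "real^'m^'n"
  assumes ps: "{A *v l | l. \<forall>i. 0 \<le> l $ i} = UNIV"
    and infeas: "{x. \<forall>i. (transpose A *v x) $ i \<le> u $ i} = {}"
  shows "tau A u = - z_star A u" "tau A u > 0"
  using z_star_neg_if_infeasible[OF ps infeas] by (auto simp: tau_def)

subsection \<open>Strong duality\<close>

text \<open>Separate the compact convex set \<open>{(A *v t, u \<bullet> t) | t \<in> prob_simplex}\<close> from the ray
  \<open>{0} \<times> {..z}\<close> by a hyperplane with normal \<open>(v, c)\<close>; then \<open>c > 0\<close> and \<open>x = - v / c\<close> works.\<close>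
lemma min_slack_exceeds_if_dual_exceeds:
  fixes A :: "real^'m^'n"
  assumes ps: "{A *v l | l. \<forall>i. 0 \<le> l $ i} = UNIV"
    and dual_above: "\<forall>t\<in>prob_simplex. A *v t = 0 \<longrightarrow> z < u \<bullet> t"
  obtains x where "z < min_slack A u x"
proof -
  define T where "T = (\<lambda>t. (A *v t, u \<bullet> t)) ` prob_simplex"
  define R where "R = {0::real^'n} \<times> {..z}"
  have "linear (\<lambda>t. (A *v t, u \<bullet> t))"
    by (intro bounded_linear.linear bounded_linear_Pair matrix_vector_mul_bounded_linear
        bounded_linear_inner_right)
  then have T: "compact T" "convex T"
    unfolding T_def by (rule compact_convex_linear_image_prob_simplex)+
  have "T \<noteq> {}" "closed R" "convex R"
    using axis_in_prob_simplex unfolding T_def R_def by (auto intro: closed_Times convex_Times)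
  moreover have "R \<inter> T = {}" using dual_above unfolding R_def T_def by force
  ultimately obtain a b where ab: "\<forall>x\<in>R. a \<bullet> x < b" "\<forall>x\<in>T. b < a \<bullet> x"
    using separating_hyperplane_closed_compact[of R T] T by blast
  obtain v c where vc: "a = (v, c)" by (cases a)
  have below: "c * s < b" if "s \<le> z" for s
    using ab(1) that vc unfolding R_def by auto
  have above_columns: "b < v \<bullet> column i A + c * u $ i" for i
    using ab(2) vc axis_in_prob_simplex[of i]
    unfolding T_def by (force simp: matrix_vector_mult_basis inner_axis)
  obtain t where t: "t \<in> prob_simplex" "A *v t = 0" using null_prob_simplex_nonempty[OF ps] .
  then have above_null: "b < c * (u \<bullet> t)" using ab(2) vc unfolding T_def by force
  have "c \<ge> 0"
  proof (rule ccontr)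
    assume c: "\<not> c \<ge> 0"
    define s where "s = min z (b / c - 1)"
    have "c * (b / c - 1) \<le> c * s" using c by (intro mult_left_mono_neg) (auto simp: s_def)
    moreover have "c * (b / c - 1) = b - c" using c by (simp add: field_simps)
    moreover have "c * s < b" by (rule below) (simp add: s_def)
    ultimately show False using c by linarith
  qed
  moreover have "c \<noteq> 0" using below[of z] above_null by auto
  ultimately have "c > 0" by simp
  define x where "x = (- 1 / c) *\<^sub>R v"
  have "z < b / c" using below[of z] \<open>c > 0\<close> by (simp add: field_simps)
  also have "b / c < min_slack A u x"
  proof -
    obtain i where i: "min_slack A u x = u $ i - column i A \<bullet> x" by (rule min_slack_attained)
    have "b / c < (v \<bullet> column i A + c * u $ i) / c"
      using above_columns[of i] \<open>c > 0\<close> by (simp add: divide_strict_right_mono)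
    also have "\<dots> = u $ i - column i A \<bullet> x"
      using \<open>c > 0\<close> by (simp add: x_def field_simps inner_commute)
    finally show ?thesis using i by simp
  qed
  finally show ?thesis by (rule that)
qed

lemma strong_duality:
  fixes A :: "real^'m^'n"
  assumes ps: "{A *v l | l. \<forall>i. 0 \<le> l $ i} = UNIV"
  obtains t where "t \<in> prob_simplex" "A *v t = 0" "u \<bullet> t \<le> z_star A u"
proof (rule ccontr)
  assume "\<not> thesis"
  then have "\<forall>t\<in>prob_simplex. A *v t = 0 \<longrightarrow> z_star A u < u \<bullet> t" using that by force
  then obtain x where "z_star A u < min_slack A u x"
    using min_slack_exceeds_if_dual_exceeds[OF ps] by blast
  moreover have "min_slack A u x \<le> z_star A u"
    unfolding z_star_eq_SUP_min_slack by (rule cSUP_upper[OF _ bdd_above_min_slack[OF ps]]) simp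
  ultimately show False by simp
qed

subsection \<open>The condition number \<open>rho\<close>\<close>

lemma norm_mult_vec_le_l1:
  fixes M :: "real^'m^'n"
  assumes "\<forall>i. norm (column i M) \<le> t"
  shows "norm (M *v w) \<le> (\<Sum>i\<in>UNIV. \<bar>w$i\<bar>) * t"
proof -
  have "norm (M *v w) = norm (\<Sum>i\<in>UNIV. w$i *\<^sub>R column i M)"
    by (simp add: matrix_mult_sum scalar_mult_eq_scaleR)
  also have "\<dots> \<le> (\<Sum>i\<in>UNIV. \<bar>w$i\<bar> * norm (column i M))"
    using norm_sum[of "\<lambda>i. w$i *\<^sub>R column i M" UNIV] by simp
  also have "\<dots> \<le> (\<Sum>i\<in>UNIV. \<bar>w$i\<bar> * t)"
    using assms by (intro sum_mono mult_left_mono) auto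
  finally show ?thesis by (simp add: sum_distrib_right)
qed

lemma l1_unit_axis: "(\<Sum>i\<in>UNIV. \<bar>axis k (1::real) $ i\<bar>) = 1"
  by (simp add: axis_def if_distrib cong: if_cong)

lemma norm12_set_le_columns:
  fixes M :: "real^'m^'n"
  assumes "\<forall>i. norm (column i M) \<le> t" "x \<in> {norm (M *v w) | w. (\<Sum>i\<in>UNIV. \<bar>w $ i\<bar>) = 1}"
  shows "x \<le> t"
proof -
  obtain w where "x = norm (M *v w)" "(\<Sum>i\<in>UNIV. \<bar>w $ i\<bar>) = 1" using assms(2) by blast
  then show ?thesis using norm_mult_vec_le_l1[OF assms(1), of w] by simp
qed

lemma norm12_le_columns:
  fixes M :: "real^'m^'n"
  assumes "\<forall>i. norm (column i M) \<le> t"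
  shows "norm12 M \<le> t"
  unfolding norm12_def
  by (rule cSup_least) (use l1_unit_axis norm12_set_le_columns[OF assms] in blast)+

lemma norm12_nonneg: "0 \<le> norm12 (M::real^'m^'n)"
proof -
  have "\<forall>i. norm (column i M) \<le> (\<Sum>j\<in>UNIV. norm (column j M))"
    by (auto intro: member_le_sum)
  then have "bdd_above {norm (M *v w) | w. (\<Sum>i\<in>UNIV. \<bar>w $ i\<bar>) = 1}"
    by (intro bdd_aboveI) (rule norm12_set_le_columns)
  then show ?thesis
    unfolding norm12_def by (rule cSup_upper2[rotated 2]) (use l1_unit_axis in auto)
qed

lemma rho_le_norm12:
  assumes "v \<noteq> 0" "\<forall>i. (transpose (A + dA) *v v) $ i \<le> 0"
  shows "rho A \<le> norm12 dA"
  unfolding rho_def using assms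
  by (intro cInf_lower) (auto intro!: bdd_belowI[of _ 0] norm12_nonneg)

text \<open>If all columns had inner product less than \<open>rho A\<close> with the unit vector \<open>v\<close>, shifting every
  column by \<open>- t *\<^sub>R v\<close> for a \<open>t < rho A\<close> would make \<open>v\<close> a nonzero solution of \<open>A\<^sup>T v \<le> 0\<close>.\<close>
lemma rho_le_column_inner:
  fixes A :: "real^'m^'n"
  assumes rpos: "rho A > 0" and v: "norm v = 1"
  obtains i where "rho A \<le> column i A \<bullet> v"
proof (rule ccontr)
  assume H: "\<not> thesis"
  define t where "t = max 0 (Max (range (\<lambda>i. column i A \<bullet> v)))"
  have "Max (range (\<lambda>i. column i A \<bullet> v)) \<in> range (\<lambda>i. column i A \<bullet> v)"
    by (rule Max_in) auto
  then have t_less: "t < rho A" using H that rpos by (force simp: t_def not_le)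
  have t_ge: "column i A \<bullet> v \<le> t" for i
    unfolding t_def by (rule max.coboundedI2, rule Max_ge) auto
  define dA :: "real^'m^'n" where "dA = (\<chi> r i. - t * v$r)"
  have col_dA: "column i dA = - t *\<^sub>R v" for i
    by (simp add: dA_def column_def vec_eq_iff)
  have "(transpose (A + dA) *v v) $ i \<le> 0" for i
  proof -
    have "column i (A + dA) = column i A + column i dA" by (simp add: column_def vec_eq_iff)
    then have "(transpose (A + dA) *v v) $ i = column i A \<bullet> v - t * (v \<bullet> v)"
      by (simp add: transpose_mult_vec_nth col_dA inner_diff_left del: transpose_matrix_vector)
    also have "v \<bullet> v = 1" using v by (simp add: norm_eq_sqrt_inner)
    finally show ?thesis using t_ge[of i] by simp
  qed
  moreover have "v \<noteq> 0" using v by auto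
  ultimately have "rho A \<le> norm12 dA" by (blast intro: rho_le_norm12)
  also have "norm12 dA \<le> t"
    by (rule norm12_le_columns) (simp add: col_dA v t_def)
  finally show False using t_less by simp
qed

text \<open>Consequently \<open>- rho A *\<^sub>R a\<^sub>j\<close> lies in the convex hull of the (unit) columns:
  otherwise a separating direction \<open>v\<close> would have \<open>a\<^sub>i \<bullet> v < rho A\<close> for every column.\<close>
lemma neg_rho_column_in_hull:
  fixes A :: "real^'m^'n"
  assumes rpos: "rho A > 0" and unit: "\<forall>i. norm (column i A) = 1"
  obtains b where "b \<in> prob_simplex" "A *v b = - rho A *\<^sub>R column j A"
proof (rule ccontr)
  assume H: "\<not> thesis"
  define y where "y = - rho A *\<^sub>R column j A"
  define T where "T = (*v) A ` (prob_simplex :: (real^'m) set)"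
  have T: "compact T" "convex T"
    unfolding T_def by (rule compact_convex_linear_image_prob_simplex[OF matrix_vector_mul_linear])+
  have "y \<notin> T"
  proof
    assume "y \<in> T"
    then obtain t where "t \<in> prob_simplex" "A *v t = y" unfolding T_def by blast
    then show False using H that unfolding y_def by blast
  qed
  then obtain a b where ab: "a \<bullet> y < b" "\<forall>x\<in>T. b < a \<bullet> x"
    using separating_hyperplane_closed_point[OF T(2) compact_imp_closed[OF T(1)]] by blast
  have col_T: "column i A \<in> T" for i
    using axis_in_prob_simplex[of i] unfolding T_def by (force simp: matrix_vector_mult_basis)
  have "a \<noteq> 0" using ab col_T by force
  define v where "v = (- 1 / norm a) *\<^sub>R a"
  have "norm v = 1" using \<open>a \<noteq> 0\<close> by (simp add: v_def)
  then obtain i where i: "rho A \<le> column i A \<bullet> v" using rho_le_column_inner[OF rpos] by blast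
  have "column i A \<bullet> v = - (a \<bullet> column i A) / norm a" by (simp add: v_def inner_commute)
  also have "\<dots> < - (a \<bullet> y) / norm a"
    using ab(2) col_T[of i] ab(1) \<open>a \<noteq> 0\<close> by (intro divide_strict_right_mono) auto
  also have "\<dots> = v \<bullet> y" by (simp add: v_def)
  also have "\<dots> \<le> norm v * norm y" by (rule norm_cauchy_schwarz)
  also have "\<dots> = rho A" using rpos unit \<open>norm v = 1\<close> by (simp add: y_def)
  finally show False using i by simp
qed

lemma rho_null_vector:
  fixes A :: "real^'m^'n"
  assumes rpos: "rho A > 0" and unit: "\<forall>i. norm (column i A) = 1"
  obtains nu where "A *v nu = 0" "\<forall>i. 1 \<le> nu $ i"
    "norm nu \<le> real CARD('m) / rho A + sqrt (real CARD('m))"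
proof -
  have "\<forall>j. \<exists>b. b \<in> prob_simplex \<and> A *v b = - rho A *\<^sub>R column j A"
    by (metis neg_rho_column_in_hull[OF rpos unit])
  then obtain b :: "'m \<Rightarrow> real^'m" where
    b: "\<And>j. b j \<in> prob_simplex" "\<And>j. A *v b j = - rho A *\<^sub>R column j A"
    by metis
  define B where "B = (\<Sum>j\<in>UNIV. b j)"
  define nu where "nu = (1 / rho A) *\<^sub>R B + (\<chi> i. 1)"
  have "A *v B = - rho A *\<^sub>R (\<Sum>j\<in>UNIV. column j A)"
    unfolding B_def by (simp add: linear_sum[OF matrix_vector_mul_linear] b scaleR_sum_right)
  moreover have "A *v (\<chi> i. 1) = (\<Sum>j\<in>UNIV. column j A)"
    by (simp add: matrix_mult_sum scalar_mult_eq_scaleR)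
  ultimately have "A *v nu = 0"
    using rpos by (simp add: nu_def matrix_vector_right_distrib matrix_vector_mult_scaleR)
  moreover have "0 \<le> B $ i" for i
    unfolding B_def using b(1) by (auto simp: prob_simplex_def intro: sum_nonneg)
  then have "\<forall>i. 1 \<le> nu $ i" using rpos by (simp add: nu_def)
  moreover have "norm nu \<le> real CARD('m) / rho A + sqrt (real CARD('m))"
  proof -
    have "norm B \<le> (\<Sum>j\<in>UNIV. norm (b j))" unfolding B_def by (rule norm_sum)
    also have "\<dots> \<le> real CARD('m)"
      using sum_mono[of UNIV "\<lambda>j. norm (b j)" "\<lambda>_. 1"] norm_le_1_prob_simplex[OF b(1)] by simp
    finally have "norm B / rho A \<le> real CARD('m) / rho A"
      using rpos by (simp add: divide_right_mono)
    then show ?thesis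
      using rpos norm_triangle_ineq[of "(1 / rho A) *\<^sub>R B" "\<chi> i. 1"]
      by (simp add: nu_def norm_eq_sqrt_inner[of "\<chi> i. 1"] inner_vec_def)
  qed
  ultimately show ?thesis by (rule that)
qed

lemma pos_span_surj:
  fixes A :: "real^'m^'n"
  assumes "{A *v l | l. \<forall>i. 0 \<le> l $ i} = UNIV"
  shows "surj ((*v) A)"
  by (metis pos_span_obtain[OF assms] surjI)

lemma proj_A_mult_vec:
  "proj_A A *v u = u - transpose A *v (matrix_inv (A ** transpose A) *v (A *v u))"
  by (simp add: proj_A_def matrix_vector_mult_diff_rdistrib matrix_vector_mul_assoc
      matrix_mul_assoc del: transpose_matrix_vector)

lemma inner_proj_A_null:
  assumes "A *v d = 0"
  shows "(proj_A A *v u) \<bullet> d = u \<bullet> (d::real^'m)"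
proof -
  have "(transpose A *v y) \<bullet> d = y \<bullet> (A *v d)" for y by (simp add: dot_lmul_matrix)
  then show ?thesis using assms by (simp add: proj_A_mult_vec inner_diff_left del: transpose_matrix_vector)
qed

lemma invertible_mult_transpose:
  fixes A :: "real^'m^'n"
  assumes "surj ((*v) A)"
  shows "invertible (A ** transpose A)"
proof -
  have "x = 0" if "(A ** transpose A) *v x = 0" for x
  proof -
    have "(transpose A *v x) \<bullet> (transpose A *v x) = x \<bullet> ((A ** transpose A) *v x)"
      by (simp add: dot_lmul_matrix[symmetric] matrix_vector_mul_assoc[symmetric])
    then have At: "transpose A *v x = 0" using that by simp
    obtain l where "A *v l = x" using assms by (metis surjD)
    then have "x \<bullet> x = (transpose A *v x) \<bullet> l" by (simp add: dot_lmul_matrix)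
    then show "x = 0" using At by simp
  qed
  then show ?thesis
    using matrix_left_invertible_ker invertible_left_inverse by blast
qed

lemma proj_A_in_null:
  fixes A :: "real^'m^'n"
  assumes "surj ((*v) A)"
  shows "A *v (proj_A A *v u) = 0"
proof -
  define X where "X = A ** transpose A"
  have "X ** matrix_inv X = mat 1"
    using invertible_mult_transpose[OF assms] unfolding X_def invertible_def matrix_inv_def
    by (rule someI_ex[THEN conjunct1])
  then show ?thesis
    by (simp add: proj_A_mult_vec matrix_vector_mult_diff_distrib matrix_vector_mul_assoc
        matrix_mul_assoc X_def del: transpose_matrix_vector)
qed

subsection \<open>Radii of balls inscribed in \<open>Dset\<close>\<close>

definition inscribed_radii :: "real^'m^'n \<Rightarrow> real^'m \<Rightarrow> real set" where
  "inscribed_radii A u = {r. \<exists>lc. A *v lc = 0 \<and> cball lc r \<inter> {l. A *v l = 0} \<subseteq> Dset A u}"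

lemma r_star_eq_Sup_inscribed_radii: "r_star A u = Sup (inscribed_radii A u)"
  by (simp add: r_star_def inscribed_radii_def)

lemma inscribed_radius_le_1:
  fixes A :: "real^'m^'n"
  assumes ps: "{A *v l | l. \<forall>i. 0 \<le> l $ i} = UNIV" and r: "r \<in> inscribed_radii A u"
  shows "r \<le> 1"
proof (rule ccontr)
  assume "\<not> r \<le> 1"
  then have r1: "r > 1" by simp
  obtain lc where lc: "A *v lc = 0" "cball lc r \<inter> {l. A *v l = 0} \<subseteq> Dset A u"
    using r by (auto simp: inscribed_radii_def)
  obtain mu where mu: "A *v mu = 0" "\<forall>i. 1 \<le> mu $ i"
    using pos_span_null_vector_ge_1[OF ps] by blast
  have "mu \<noteq> 0" using mu(2) by (metis zero_index not_one_le_zero)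
  define d where "d = (r / norm mu) *\<^sub>R mu"
  have nd: "norm d = r" using \<open>mu \<noteq> 0\<close> r1 by (simp add: d_def)
  have "A *v d = 0" using mu(1) by (simp add: d_def matrix_vector_mult_scaleR)
  then have "lc + d \<in> Dset A u" "lc - d \<in> Dset A u"
    using lc nd by (auto intro!: subsetD[OF lc(2)]
        simp: dist_norm matrix_vector_right_distrib matrix_vector_mult_diff_distrib)
  then have "norm (lc + d) \<le> 1" "norm (lc - d) \<le> 1" by (auto simp: Dset_def)
  moreover have "norm ((lc + d) - (lc - d)) \<le> norm (lc + d) + norm (lc - d)"
    by (rule norm_triangle_ineq4)
  moreover have "(lc + d) - (lc - d) = 2 *\<^sub>R d" by (simp add: scaleR_2)
  ultimately show False using nd r1 by simp
qed

lemma bdd_above_inscribed_radii: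
  fixes A :: "real^'m^'n"
  assumes "{A *v l | l. \<forall>i. 0 \<le> l $ i} = UNIV"
  shows "bdd_above (inscribed_radii A u)"
  using inscribed_radius_le_1[OF assms] by (rule bdd_aboveI)

text \<open>Moving the centre by \<open>r\<close> along the nullspace directions \<open>lc\<close> and \<open>proj_A A *v u\<close>
  stays inside \<open>Dset A u\<close>.\<close>
lemma inscribed_ball_centre:
  fixes A :: "real^'m^'n"
  assumes surj: "surj ((*v) A)" and r: "r > 0"
    and lc: "A *v lc = 0" "cball lc r \<inter> {l. A *v l = 0} \<subseteq> Dset A u"
  shows "\<forall>i. 0 \<le> lc $ i" "norm lc + r \<le> 1" "u \<bullet> lc + r * norm (proj_A A *v u) < 0"
proof -
  have in_D: "lc + (r / norm d) *\<^sub>R d \<in> Dset A u" if "A *v d = 0" "d \<noteq> 0" for d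
    using lc r that by (intro subsetD[OF lc(2)])
      (auto simp: dist_norm matrix_vector_right_distrib matrix_vector_mult_scaleR)
  have "lc \<in> Dset A u" using lc r by auto
  then have lcD: "\<forall>i. 0 \<le> lc $ i" "u \<bullet> lc < 0" by (auto simp: Dset_def)
  then show "\<forall>i. 0 \<le> lc $ i" by simp
  have "lc \<noteq> 0" using lcD(2) by auto
  then have "norm ((1 + r / norm lc) *\<^sub>R lc) \<le> 1"
    using in_D[OF lc(1)] by (simp add: Dset_def algebra_simps)
  then show "norm lc + r \<le> 1"
    using \<open>lc \<noteq> 0\<close> r by (simp add: distrib_right add_pos_pos)
  define w where "w = proj_A A *v u"
  have Aw: "A *v w = 0" unfolding w_def by (rule proj_A_in_null[OF surj])
  show "u \<bullet> lc + r * norm w < 0"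
  proof (cases "w = 0")
    case True then show ?thesis using lcD by simp
  next
    case False
    have "u \<bullet> w = norm w * norm w"
      using inner_proj_A_null[OF Aw, of u]
      by (simp add: w_def power2_norm_eq_inner[symmetric] power2_eq_square)
    then have "u \<bullet> (lc + (r / norm w) *\<^sub>R w) = u \<bullet> lc + r * norm w"
      using False by (simp add: inner_add_right)
    then show ?thesis using in_D[OF Aw False] by (simp add: Dset_def)
  qed
qed

text \<open>Normalising the centre into the simplex and applying weak duality.\<close>
lemma inscribed_radius_bound:
  fixes A :: "real^'m^'n" and u :: "real^'m"
  assumes ps: "{A *v l | l. \<forall>i. 0 \<le> l $ i} = UNIV"
    and infeas: "{x. \<forall>i. (transpose A *v x) $ i \<le> u $ i} = {}"
    and r: "r \<in> inscribed_radii A u"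
  shows "r * (norm (proj_A A *v u) / (tau A u * sqrt (real CARD('m))) + 1) \<le> 1"
proof -
  define w where "w = proj_A A *v u"
  define t where "t = tau A u"
  define sm where "sm = sqrt (real CARD('m))"
  have t: "t = - z_star A u" "t > 0" using tau_eq_neg_z_star[OF ps infeas] by (auto simp: t_def)
  have sm: "sm > 0" by (simp add: sm_def)
  have "0 \<le> norm w / (t * sm)" using t(2) sm by (simp add: divide_nonneg_pos)
  show ?thesis
  proof (cases "r \<le> 0")
    case True
    then show ?thesis using \<open>0 \<le> norm w / (t * sm)\<close> unfolding w_def t_def sm_def
      by (smt (verit) mult_nonpos_nonneg)
  next
    case False
    obtain lc where lc: "A *v lc = 0" "cball lc r \<inter> {l. A *v l = 0} \<subseteq> Dset A u"
      using r by (auto simp: inscribed_radii_def)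
    have r0: "r > 0" using False by simp
    note centre = inscribed_ball_centre[OF pos_span_surj[OF ps] r0 lc, folded w_def]
    have "lc \<noteq> 0" using centre(3) r0 by (smt (verit) inner_zero_right mult_nonneg_nonneg norm_ge_zero)
    define sg where "sg = (\<Sum>i\<in>UNIV. lc $ i)"
    have "norm lc \<le> sg" unfolding sg_def using norm_le_l1_cart[of lc] centre(1) by simp
    then have sg: "sg > 0" using \<open>lc \<noteq> 0\<close> by (smt (verit) zero_less_norm_iff)
    have "sg \<le> sm * norm lc" unfolding sg_def sm_def by (rule sum_le_sqrt_card_norm)
    also have "\<dots> \<le> sm * (1 - r)" using centre(2) sm by (intro mult_left_mono) auto
    finally have sg_le: "sg \<le> sm * (1 - r)" .
    have "z_star A u \<le> u \<bullet> ((1 / sg) *\<^sub>R lc)"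
      using centre(1) sg lc(1)
      by (intro z_star_le_dual) (auto simp: matrix_vector_mult_scaleR sg_def
          intro: normalized_in_prob_simplex[unfolded sg_def])
    then have "- t * sg \<le> u \<bullet> lc" using t sg by (simp add: field_simps)
    then have "r * norm w < t * sg" using centre(3) by linarith
    also have "\<dots> \<le> t * (sm * (1 - r))" using sg_le t by (intro mult_left_mono) auto
    finally have "r * norm w \<le> (1 - r) * (t * sm)" by (simp add: algebra_simps)
    then have "r * norm w / (t * sm) \<le> 1 - r" using t(2) sm by (simp add: pos_divide_le_eq)
    then show ?thesis unfolding w_def t_def sm_def by (simp add: distrib_left)
  qed
qed

text \<open>The ball of radius \<open>1 / (k + norm nu + 1)\<close> around the normalised \<open>k *\<^sub>R th + nu\<close>:
  \<open>nu \<ge> 1\<close> keeps it in the orthant, and for large \<open>k\<close> the dual solution \<open>th\<close> makes \<open>u\<close> negative.\<close>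
lemma inscribed_radius_from_null_vector:
  fixes A :: "real^'m^'n" and u :: "real^'m"
  assumes nu: "A *v nu = 0" "\<forall>i. 1 \<le> nu $ i"
    and th: "th \<in> prob_simplex" "A *v th = 0" "u \<bullet> th \<le> - t" and t: "t > 0"
    and k: "norm (proj_A A *v u) * (norm nu + 1) / t < k"
  shows "1 / (k + norm nu + 1) \<in> inscribed_radii A u"
proof -
  define w where "w = proj_A A *v u"
  have "0 \<le> norm w * (norm nu + 1) / t" using t by simp
  then have k0: "k > 0" using k unfolding w_def by linarith
  define al where "al = 1 / (k + norm nu + 1)"
  have "k + norm nu + 1 > 0" using k0 norm_ge_zero[of nu] by linarith
  then have al: "al > 0" "al * (k + norm nu + 1) = 1" by (simp_all add: al_def)
  define lc where "lc = al *\<^sub>R (k *\<^sub>R th + nu)"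
  have Alc: "A *v lc = 0" using nu th
    by (simp add: lc_def matrix_vector_mult_scaleR matrix_vector_right_distrib)
  have "l \<in> Dset A u" if l: "norm (l - lc) \<le> al" "A *v l = 0" for l
  proof -
    have "0 \<le> l $ i" for i
    proof -
      have "1 \<le> k * th $ i + nu $ i"
        using nu(2) k0 th(1) by (smt (verit) mult_nonneg_nonneg prob_simplex_def mem_Collect_eq)
      then have "al \<le> lc $ i" using al by (simp add: lc_def mult_left_mono[of 1, simplified])
      then show ?thesis using component_le_norm_cart[of "l - lc" i] l(1) by (simp add: abs_le_iff)
    qed
    moreover have "u \<bullet> l < 0"
    proof -
      have "A *v (l - lc) = 0" using l(2) Alc by (simp add: matrix_vector_mult_diff_distrib)
      then have "u \<bullet> l = al * (k * (u \<bullet> th) + w \<bullet> nu) + w \<bullet> (l - lc)"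
        using inner_proj_A_null[of A "l - lc" u] inner_proj_A_null[OF nu(1), of u]
        by (simp add: w_def lc_def algebra_simps)
      also have "\<dots> \<le> al * (k * (- t) + norm w * norm nu) + norm w * al"
      proof -
        have "k * (u \<bullet> th) \<le> k * (- t)" using th(3) k0 by (intro mult_left_mono) auto
        moreover have "w \<bullet> nu \<le> norm w * norm nu" by (rule norm_cauchy_schwarz)
        ultimately have "al * (k * (u \<bullet> th) + w \<bullet> nu) \<le> al * (k * (- t) + norm w * norm nu)"
          using al by (intro mult_left_mono) auto
        moreover have "w \<bullet> (l - lc) \<le> norm w * al"
          using norm_cauchy_schwarz[of w "l - lc"] mult_left_mono[OF l(1), of "norm w"] by simp
        ultimately show ?thesis by (rule add_mono)
      qed
      also have "\<dots> = al * (norm w * (norm nu + 1) - k * t)" by (simp add: algebra_simps)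
      also have "\<dots> < 0"
        using k t al unfolding w_def by (intro mult_pos_neg) (simp_all add: pos_divide_less_eq)
      finally show ?thesis .
    qed
    moreover have "norm l \<le> 1"
    proof -
      have "norm lc \<le> al * (k * norm th + norm nu)"
        using norm_triangle_ineq[of "k *\<^sub>R th" nu] k0 al unfolding lc_def
        by (simp add: mult_left_mono)
      also have "\<dots> \<le> al * (k + norm nu)"
        using norm_le_1_prob_simplex[OF th(1)] k0 al by (intro mult_left_mono) auto
      finally have "norm l \<le> al * (k + norm nu) + al"
        using norm_triangle_sub[of l lc] l(1) by linarith
      also have "\<dots> = 1" using al(2) by (simp add: algebra_simps)
      finally show ?thesis .
    qed
    ultimately show ?thesis using l(2) by (simp add: Dset_def)
  qed
  then have "cball lc al \<inter> {l. A *v l = 0} \<subseteq> Dset A u"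
    by (auto simp: dist_norm norm_minus_commute)
  then show ?thesis using Alc unfolding inscribed_radii_def al_def by blast
qed

lemma r_star_pos_inverse_le:
  fixes A :: "real^'m^'n" and u :: "real^'m"
  assumes ps: "{A *v l | l. \<forall>i. 0 \<le> l $ i} = UNIV"
    and infeas: "{x. \<forall>i. (transpose A *v x) $ i \<le> u $ i} = {}"
    and nu: "A *v nu = 0" "\<forall>i. 1 \<le> nu $ i"
  shows "r_star A u > 0"
    and "1 / r_star A u \<le> (norm (proj_A A *v u) / tau A u + 1) * (norm nu + 1)"
proof -
  define t where "t = tau A u"
  have t: "t = - z_star A u" "t > 0" using tau_eq_neg_z_star[OF ps infeas] by (auto simp: t_def)
  obtain th where th: "th \<in> prob_simplex" "A *v th = 0" "u \<bullet> th \<le> - t"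
    using strong_duality[OF ps, of u] t(1) by auto
  define K where "K = norm (proj_A A *v u) * (norm nu + 1) / t"
  have "K \<ge> 0" unfolding K_def using t(2) by simp
  then have pos: "K + e + norm nu + 1 > 0" if "e > 0" for e
    using that norm_ge_zero[of nu] by linarith
  have le_r_star: "1 / (K + e + norm nu + 1) \<le> r_star A u" if "e > 0" for e
    unfolding r_star_eq_Sup_inscribed_radii
    using inscribed_radius_from_null_vector[OF nu th t(2), of "K + e"] that
    by (intro cSup_upper[OF _ bdd_above_inscribed_radii[OF ps]]) (simp add: K_def)
  show rpos: "r_star A u > 0"
    using le_r_star[of 1] pos[of 1] by (meson divide_pos_pos less_le_trans zero_less_one)
  have "1 / r_star A u \<le> K + norm nu + 1 + e" if "e > 0" for e
  proof -
    have "1 / r_star A u \<le> 1 / (1 / (K + e + norm nu + 1))"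
      using le_r_star[OF that] pos[OF that] rpos by (intro divide_left_mono) auto
    then show ?thesis by simp
  qed
  then have "1 / r_star A u \<le> K + norm nu + 1" by (rule field_le_epsilon)
  also have "\<dots> = (norm (proj_A A *v u) / t + 1) * (norm nu + 1)"
    using t by (simp add: K_def field_simps)
  finally show "1 / r_star A u \<le> (norm (proj_A A *v u) / tau A u + 1) * (norm nu + 1)"
    by (simp add: t_def)
qed

lemma inverse_r_star_lower_bound:
  fixes A :: "real^'m^'n" and u :: "real^'m"
  assumes ps: "{A *v l | l. \<forall>i. 0 \<le> l $ i} = UNIV"
    and infeas: "{x. \<forall>i. (transpose A *v x) $ i \<le> u $ i} = {}"
  shows "norm (proj_A A *v u) / (tau A u * sqrt (real CARD('m))) + 1 \<le> 1 / r_star A u"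
proof -
  define c where "c = norm (proj_A A *v u) / (tau A u * sqrt (real CARD('m))) + 1"
  have "0 \<le> norm (proj_A A *v u) / (tau A u * sqrt (real CARD('m)))"
    using tau_eq_neg_z_star(2)[OF ps infeas] by (intro divide_nonneg_pos) auto
  then have "c > 0" unfolding c_def by linarith
  have "-1 \<in> inscribed_radii A u" by (auto simp: inscribed_radii_def intro!: exI[of _ 0])
  then have "r_star A u \<le> 1 / c"
    unfolding r_star_eq_Sup_inscribed_radii
    using inscribed_radius_bound[OF ps infeas] \<open>c > 0\<close>
    by (intro cSup_least) (auto simp: c_def pos_le_divide_eq)
  moreover obtain mu where "A *v mu = 0" "\<forall>i. 1 \<le> mu $ i"
    using pos_span_null_vector_ge_1[OF ps] by blast
  then have "r_star A u > 0" by (rule r_star_pos_inverse_le(1)[OF ps infeas])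
  ultimately show ?thesis
    using \<open>c > 0\<close> by (simp add: c_def le_divide_eq pos_le_divide_eq mult.commute)
qed

theorem lemma12:
  fixes A :: "real^'m^'n" and u :: "real^'m"
  assumes unit_cols: "\<forall>i. norm (column i A) = 1"
    and pos_span: "{A *v l | l. \<forall>i. 0 \<le> l $ i} = UNIV"
    and infeas: "{x. \<forall>i. (transpose A *v x) $ i \<le> u $ i} = {}"
  shows "norm (proj_A A *v u) / (tau A u * sqrt (real CARD('m))) + 1 \<le> 1 / r_star A u
         \<and> (rho A > 0 \<longrightarrow>
             1 / r_star A u \<le> (norm (proj_A A *v u) / tau A u + 1)
                                * (real CARD('m) / rho A + sqrt (real CARD('m)) + 1))"
proof (intro conjI impI)
  show "norm (proj_A A *v u) / (tau A u * sqrt (real CARD('m))) + 1 \<le> 1 / r_star A u"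
    by (rule inverse_r_star_lower_bound[OF pos_span infeas])
next
  assume "rho A > 0"
  then obtain nu where nu: "A *v nu = 0" "\<forall>i. 1 \<le> nu $ i"
    "norm nu \<le> real CARD('m) / rho A + sqrt (real CARD('m))"
    using rho_null_vector[OF _ unit_cols] by blast
  have "1 / r_star A u \<le> (norm (proj_A A *v u) / tau A u + 1) * (norm nu + 1)"
    by (rule r_star_pos_inverse_le(2)[OF pos_span infeas nu(1,2)])
  also have "\<dots> \<le> (norm (proj_A A *v u) / tau A u + 1)
                   * (real CARD('m) / rho A + sqrt (real CARD('m)) + 1)"
    using nu(3) tau_eq_neg_z_star(2)[OF pos_span infeas] by (intro mult_left_mono) auto
  finally show "1 / r_star A u \<le> (norm (proj_A A *v u) / tau A u + 1)
                   * (real CARD('m) / rho A + sqrt (real CARD('m)) + 1)" .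
qed

end
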